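(* Let $N\ge2$ and let $\mathbb{P}_N$ be the path graph on servers $S_1,\dots,S_N$ (edges $\{S_i,S_{i+1}\}$, $i\in[N-1]$). Then for every $r\ge1$, $$\mathscr{C}\left(\mathbb{P}_N^{(r)}\right)\ \ge\ \frac{2}{N}\cdot\frac{1}{2-\frac{1}{2^{r-1}}}.$$
   Context: Multigraph-based PIR model. There are $N$ non-colluding servers $S_1,\dots,S_N$. For a simple graph $G$ on these servers with $K'$ edges, $G^{(r)}$ is the $r$-multigraph obtained by replacing each edge by $r$ parallel edges. There are $K=rK'$ files, each independent and uniform on $\mathbb{F}_2^{L}$; for each edge of $G$, a distinct set of $r$ files is stored exactly on its two endpoints. In a PIR scheme, a user privately chooses a desired file index $\theta$ and generates queries $Q_1,\dots,Q_N$ independent of all files; answer $A_i$ is a deterministic function of $Q_i$ and the files on $S_i$. Reliability: $W_\theta$ is a function of all answers and queries. Privacy: for every server $i$ and every $\theta$, the distribution of $(Q_i^{(\theta)},A_i^{(\theta)},\text{files on }S_i)$ does not depend on $\theta$. The rate is $L/\sum_i H(A_i)$ and the capacity $\mathscr{C}(G^{(r)})$ is the supremum of rates over all schemes, with $L$ arbitrarily large. *)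

theory Defs
  imports "HOL-Probability.Probability"
begin

text \<open>Servers are indexed 0,...,N-1 (S_1,...,S_N).
  A simple graph G is given by its list of edges E (pairs of server indices);
  K' = length E. In the r-multigraph each edge e gets r files, namely the files
  with indices k in [e*r, (e+1)*r); file k is stored exactly on the two endpoints
  of edge E!(k div r). A file is a bit string of length L (an element of F_2^L).\<close>

definition num_files :: "(nat \<times> nat) list \<Rightarrow> nat \<Rightarrow> nat" where
  "num_files E r = r * length E"

definition stored :: "(nat \<times> nat) list \<Rightarrow> nat \<Rightarrow> nat \<Rightarrow> nat \<Rightarrow> bool" where
  "stored E r k i \<longleftrightarrow> k < num_files E r \<and>
     (i = fst (E ! (k div r)) \<or> i = snd (E ! (k div r)))"

definition file_space :: "nat \<Rightarrow> nat \<Rightarrow> (nat \<Rightarrow> bool list) set" where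
  "file_space K L = PiE {0..<K} (\<lambda>_. {xs. length xs = L})"

definition files_pmf :: "nat \<Rightarrow> nat \<Rightarrow> (nat \<Rightarrow> bool list) pmf" where
  "files_pmf K L = pmf_of_set (file_space K L)"

definition entropy2 :: "'a pmf \<Rightarrow> real" where
  "entropy2 p = (\<Sum>x\<in>set_pmf p. - pmf p x * log 2 (pmf p x))"

text \<open>A scheme: Qd \<theta> is the joint distribution of the query tuple (Q_0,...,Q_{N-1})
  (components at indices \<ge> N are fixed to 0) for desired file \<theta>; it is sampled
  independently of the files. Ans i q W is the answer of server i to query q.
  Dec \<theta> q a is the user's decoder from all queries and all answers.\<close>

definition joint_pmf ::
  "nat \<Rightarrow> nat \<Rightarrow> (nat \<Rightarrow> (nat \<Rightarrow> nat) pmf) \<Rightarrow> nat \<Rightarrow> ((nat \<Rightarrow> nat) \<times> (nat \<Rightarrow> bool list)) pmf" where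
  "joint_pmf K L Qd \<theta> = pair_pmf (Qd \<theta>) (files_pmf K L)"

definition answer_pmf ::
  "nat \<Rightarrow> nat \<Rightarrow> (nat \<Rightarrow> (nat \<Rightarrow> nat) pmf) \<Rightarrow> (nat \<Rightarrow> nat \<Rightarrow> (nat \<Rightarrow> bool list) \<Rightarrow> nat)
   \<Rightarrow> nat \<Rightarrow> nat \<Rightarrow> nat pmf" where
  "answer_pmf K L Qd Ans i \<theta> = map_pmf (\<lambda>(q, W). Ans i (q i) W) (joint_pmf K L Qd \<theta>)"

definition server_view ::
  "(nat \<times> nat) list \<Rightarrow> nat \<Rightarrow> nat \<Rightarrow> (nat \<Rightarrow> (nat \<Rightarrow> nat) pmf)
   \<Rightarrow> (nat \<Rightarrow> nat \<Rightarrow> (nat \<Rightarrow> bool list) \<Rightarrow> nat) \<Rightarrow> nat \<Rightarrow> nat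
   \<Rightarrow> (nat \<times> nat \<times> (nat \<Rightarrow> bool list)) pmf" where
  "server_view E r L Qd Ans i \<theta> =
     map_pmf (\<lambda>(q, W). (q i, Ans i (q i) W, \<lambda>k. if stored E r k i then W k else []))
       (joint_pmf (num_files E r) L Qd \<theta>)"

definition pir_scheme ::
  "nat \<Rightarrow> (nat \<times> nat) list \<Rightarrow> nat \<Rightarrow> nat \<Rightarrow> (nat \<Rightarrow> (nat \<Rightarrow> nat) pmf)
   \<Rightarrow> (nat \<Rightarrow> nat \<Rightarrow> (nat \<Rightarrow> bool list) \<Rightarrow> nat)
   \<Rightarrow> (nat \<Rightarrow> (nat \<Rightarrow> nat) \<Rightarrow> (nat \<Rightarrow> nat) \<Rightarrow> bool list) \<Rightarrow> bool" where
  "pir_scheme N E r L Qd Ans Dec \<longleftrightarrow>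
     (let K = num_files E r in
     \<comment> \<open>finitely many possible query tuples; only servers 0..N-1 get queries\<close>
     (\<forall>\<theta><K. finite (set_pmf (Qd \<theta>)) \<and> (\<forall>q\<in>set_pmf (Qd \<theta>). \<forall>i\<ge>N. q i = 0)) \<and>
     \<comment> \<open>answer of server i depends only on its query and the files it stores\<close>
     (\<forall>i<N. \<forall>q. \<forall>W\<in>file_space K L. \<forall>W'\<in>file_space K L.
        (\<forall>k. stored E r k i \<longrightarrow> W k = W' k) \<longrightarrow> Ans i q W = Ans i q W') \<and>
     \<comment> \<open>reliability (zero error): W_\<theta> is a function of all queries and answers\<close>
     (\<forall>\<theta><K. \<forall>q\<in>set_pmf (Qd \<theta>). \<forall>W\<in>file_space K L.
        Dec \<theta> q (\<lambda>i. if i < N then Ans i (q i) W else 0) = W \<theta>) \<and>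
     \<comment> \<open>privacy\<close>
     (\<forall>i<N. \<forall>\<theta><K. \<forall>\<theta>'<K. server_view E r L Qd Ans i \<theta> = server_view E r L Qd Ans i \<theta>'))"

text \<open>Rate L / sum_i H(A_i). By privacy H(A_i) does not depend on \<theta>;
  we take the worst case over \<theta> (which is the same value).\<close>
definition pir_rate ::
  "nat \<Rightarrow> (nat \<times> nat) list \<Rightarrow> nat \<Rightarrow> nat \<Rightarrow> (nat \<Rightarrow> (nat \<Rightarrow> nat) pmf)
   \<Rightarrow> (nat \<Rightarrow> nat \<Rightarrow> (nat \<Rightarrow> bool list) \<Rightarrow> nat) \<Rightarrow> real" where
  "pir_rate N E r L Qd Ans =
     real L / (MAX \<theta>\<in>{0..<num_files E r}.
                 (\<Sum>i<N. entropy2 (answer_pmf (num_files E r) L Qd Ans i \<theta>)))"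

definition pir_capacity :: "nat \<Rightarrow> (nat \<times> nat) list \<Rightarrow> nat \<Rightarrow> ereal" where
  "pir_capacity N E r = Sup {ereal (pir_rate N E r L Qd Ans) | L Qd Ans Dec.
       L > 0 \<and> pir_scheme N E r L Qd Ans Dec}"

definition path_edges :: "nat \<Rightarrow> (nat \<times> nat) list" where
  "path_edges N = map (\<lambda>i. (i, Suc i)) [0..<N - 1]"

end

theory Submission imports Defs "HOL-Library.Z2" begin

text \<open>Take files of L = 2^r bits. Edge e carries r files; a labeling \<sigma> is a bijection between the
  subsets of [r] and the bit positions. For every nonempty T \<subseteq> [r], server i returns one bit:
  the XOR over the files k \<in> T of its left edge at position \<sigma>L(T), plus the same for its right edge
  with \<sigma>R. The two endpoints of edge e use the same random labeling, except that for the desired file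
  k0 on edge e0 the right endpoint composes it with T \<mapsto> T \<triangle> {k0}. Along the path the common
  parities cancel, so the user learns the edge-e0 parities under both labelings, and the two
  parities at T and T \<triangle> {k0} XOR to the bit of file k0 at position \<sigma>(T). Each server sees a pair of
  uniformly random labelings whatever the desired file is, and each answer has 2^r - 1 bits,
  giving rate 2^r / (N (2^r - 1)).\<close>

(* Keep sums of bits as sums: rewriting them to XOR hides cancellations from the simplifier. *)
declare add_bit_eq_xor [simp del]

section \<open>Entropy\<close>

lemma entropy2_le_log_card:
  fixes p :: "'a pmf"
  assumes fin: "finite (set_pmf p)"
  shows "entropy2 p \<le> log 2 (real (card (set_pmf p)))"
proof -
  let ?S = "set_pmf p"
  let ?n = "real (card ?S)"
  have npos: "?n > 0" using fin set_pmf_not_empty by (simp add: card_gt_0_iff)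
  have sum1: "(\<Sum>x\<in>?S. pmf p x) = 1" using sum_pmf_eq_1[OF fin] by simp
  have key: "- pmf p x * ln (pmf p x) - pmf p x * ln ?n \<le> 1 / ?n - pmf p x" if x: "x \<in> ?S" for x
  proof -
    have px: "pmf p x > 0" using x by (simp add: pmf_positive)
    have "pmf p x * ln (1 / (pmf p x * ?n)) \<le> pmf p x * (1 / (pmf p x * ?n) - 1)"
      using px npos by (intro mult_left_mono ln_le_minus_one) simp_all
    moreover have "ln (1 / (pmf p x * ?n)) = - ln (pmf p x) - ln ?n"
      using px npos by (simp add: ln_div ln_mult)
    moreover have "pmf p x * (1 / (pmf p x * ?n) - 1) = 1 / ?n - pmf p x"
      using px npos by (simp add: field_simps)
    ultimately show ?thesis by (simp add: algebra_simps)
  qed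
  have "(\<Sum>x\<in>?S. - pmf p x * ln (pmf p x) - pmf p x * ln ?n) \<le> (\<Sum>x\<in>?S. 1 / ?n - pmf p x)"
    by (rule sum_mono) (rule key)
  also have "\<dots> = 0" using sum1 npos by (simp add: sum_subtractf)
  finally have "(\<Sum>x\<in>?S. - pmf p x * ln (pmf p x)) \<le> ln ?n"
    using sum1 by (simp add: sum_subtractf sum_distrib_right[symmetric])
  then have "(\<Sum>x\<in>?S. - pmf p x * ln (pmf p x)) / ln 2 \<le> ln ?n / ln 2"
    by (simp add: divide_right_mono)
  then show ?thesis
    unfolding entropy2_def log_def by (simp add: sum_divide_distrib)
qed

lemma entropy2_term_nonneg: "0 \<le> - pmf p x * log 2 (pmf p x)"
proof (cases "pmf p x = 0")
  case False
  then have "0 < pmf p x" using pmf_nonneg[of p x] by linarith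
  moreover have "log 2 (pmf p x) \<le> 0" using calculation pmf_le_1[of p x] by simp
  ultimately show ?thesis by (simp add: mult_nonneg_nonpos)
qed simp

lemma entropy2_nonneg: "0 \<le> entropy2 p"
  unfolding entropy2_def by (intro sum_nonneg entropy2_term_nonneg)

lemma entropy2_pos:
  assumes fin: "finite (set_pmf p)" and x: "x \<in> set_pmf p" and y: "y \<in> set_pmf p" and "x \<noteq> y"
  shows "0 < entropy2 p"
  unfolding entropy2_def
proof (rule sum_pos2[OF fin x])
  have px: "pmf p x > 0" "pmf p y > 0" using x y by (simp_all add: pmf_positive)
  have "(\<Sum>z\<in>{x,y}. pmf p z) \<le> 1"
    using measure_pmf.prob_le_1[of p "{x,y}"] by (simp add: measure_measure_pmf_finite)
  then have "log 2 (pmf p x) < 0" using px \<open>x \<noteq> y\<close> by simp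
  then show "0 < - pmf p x * log 2 (pmf p x)" using px by (simp add: mult_pos_neg)
qed (rule entropy2_term_nonneg)

lemma map_pmf_of_set_involution:
  assumes "finite A" "A \<noteq> {}" "\<And>x. x \<in> A \<Longrightarrow> f x \<in> A" "\<And>x. x \<in> A \<Longrightarrow> f (f x) = x"
  shows "map_pmf f (pmf_of_set A) = pmf_of_set A"
proof -
  have "inj_on f A" by (metis inj_onI assms(4))
  moreover have "f ` A = A" using assms(3,4) by (metis image_subset_iff subsetI subset_antisym image_eqI)
  ultimately show ?thesis using map_pmf_of_set_inj[OF _ assms(2,1)] by metis
qed

lemma pir_capacity_ge_rate:
  assumes "pir_scheme N E r L Qd Ans Dec" "0 < L"
  shows "ereal (pir_rate N E r L Qd Ans) \<le> pir_capacity N E r"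
  unfolding pir_capacity_def using assms by (intro Sup_upper) blast

lemma pir_rate_ge:
  assumes K: "0 < num_files E r"
    and le: "\<And>i \<theta>. entropy2 (answer_pmf (num_files E r) L Qd Ans i \<theta>) \<le> c"
    and pos: "0 < entropy2 (answer_pmf (num_files E r) L Qd Ans j \<theta>')" "j < N" "\<theta>' < num_files E r"
  shows "real L / (real N * c) \<le> pir_rate N E r L Qd Ans"
proof -
  define S where "S \<theta> = (\<Sum>i<N. entropy2 (answer_pmf (num_files E r) L Qd Ans i \<theta>))" for \<theta>
  define M where "M = (MAX \<theta>\<in>{0..<num_files E r}. S \<theta>)"
  have "0 < S \<theta>'"
    unfolding S_def using pos by (intro sum_pos2[of _ j]) (auto intro: entropy2_nonneg)
  also have "S \<theta>' \<le> M" unfolding M_def using pos(3) by (intro Max_ge) auto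
  finally have "0 < M" .
  moreover have "M \<le> real N * c"
    unfolding M_def S_def using K sum_mono[of "{..<N}", OF le] by (subst Max_le_iff) auto
  ultimately have "real L / (real N * c) \<le> real L / M" by (intro divide_left_mono) auto
  then show ?thesis unfolding pir_rate_def M_def S_def .
qed

section \<open>Labelings of subsets by bit positions\<close>

definition flip :: "nat \<Rightarrow> nat set \<Rightarrow> nat set" where
  "flip k T = (if k \<in> T then T - {k} else insert k T)"

definition labelings :: "nat \<Rightarrow> (nat set \<Rightarrow> nat) set" where
  "labelings r = {\<sigma> \<in> Pow {..<r} \<rightarrow>\<^sub>E {..<2 ^ r}. bij_betw \<sigma> (Pow {..<r}) {..<2 ^ r}}"

definition flip_labeling :: "nat \<Rightarrow> nat \<Rightarrow> (nat set \<Rightarrow> nat) \<Rightarrow> nat set \<Rightarrow> nat" where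
  "flip_labeling r k \<sigma> = restrict (\<sigma> \<circ> flip k) (Pow {..<r})"

definition base_labeling :: "nat \<Rightarrow> nat set \<Rightarrow> nat" where
  "base_labeling r = (SOME \<sigma>. \<sigma> \<in> labelings r)"

lemma flip_flip [simp]: "flip k (flip k T) = T"
  unfolding flip_def by auto

lemma flip_Pow: "T \<in> Pow {..<r} \<Longrightarrow> k < r \<Longrightarrow> flip k T \<in> Pow {..<r}"
  unfolding flip_def by auto

lemma UNIV_bit: "(UNIV :: bit set) = {0, 1}"
  by (auto intro: bit.exhaust)

lemma sum_flip:
  fixes f :: "nat \<Rightarrow> bit"
  assumes "finite U"
  shows "sum f U + sum f (flip k U) = f k"
proof (cases "k \<in> U")
  case True
  then have "sum f U + sum f (flip k U) = f k + (sum f (U - {k}) + sum f (U - {k}))"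
    unfolding flip_def using sum.remove[OF assms True, of f] by (simp add: add.assoc)
  then show ?thesis by simp
next
  case False
  then have "sum f U + sum f (flip k U) = f k + (sum f U + sum f U)"
    unfolding flip_def using sum.insert[OF assms False, of f] by (simp add: add.left_commute)
  then show ?thesis by simp
qed

lemma restrict_in_labelings:
  assumes "bij_betw \<sigma> (Pow {..<r}) {..<2 ^ r}"
  shows "restrict \<sigma> (Pow {..<r}) \<in> labelings r"
  using assms bij_betw_apply[OF assms] unfolding labelings_def
  by (simp add: bij_betw_restrict_eq restrict_PiE_iff)

lemma labelings_nonempty: "labelings r \<noteq> {}"
proof -
  have "card (Pow {..<r}) = card {..<(2::nat) ^ r}" by (simp add: card_Pow)
  then obtain \<sigma> where "bij_betw \<sigma> (Pow {..<r}) {..<(2::nat) ^ r}"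
    by (metis finite_same_card_bij finite_Pow_iff finite_lessThan)
  then show ?thesis using restrict_in_labelings by blast
qed

lemma base_labeling_in_labelings: "base_labeling r \<in> labelings r"
  unfolding base_labeling_def using labelings_nonempty by (simp add: some_in_eq)

lemma finite_labelings [simp]: "finite (labelings r)"
  by (rule finite_subset[of _ "Pow {..<r} \<rightarrow>\<^sub>E {..<2 ^ r}"])
    (auto simp: labelings_def intro: finite_PiE)

lemma flip_labeling_apply: "T \<in> Pow {..<r} \<Longrightarrow> flip_labeling r k \<sigma> T = \<sigma> (flip k T)"
  unfolding flip_labeling_def by simp

lemma flip_labeling_in_labelings:
  assumes "\<sigma> \<in> labelings r" "k < r"
  shows "flip_labeling r k \<sigma> \<in> labelings r"
proof -
  have "bij_betw (flip k) (Pow {..<r}) (Pow {..<r})"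
    by (rule bij_betw_byWitness[where f' = "flip k"]) (use flip_Pow[OF _ assms(2)] in auto)
  then have "bij_betw (\<sigma> \<circ> flip k) (Pow {..<r}) {..<2 ^ r}"
    using assms(1) unfolding labelings_def by (blast intro: bij_betw_trans)
  then show ?thesis unfolding flip_labeling_def by (rule restrict_in_labelings)
qed

lemma flip_labeling_flip_labeling:
  assumes "\<sigma> \<in> labelings r" "k < r"
  shows "flip_labeling r k (flip_labeling r k \<sigma>) = \<sigma>"
proof
  fix T
  show "flip_labeling r k (flip_labeling r k \<sigma>) T = \<sigma> T"
  proof (cases "T \<in> Pow {..<r}")
    case True
    then show ?thesis using flip_Pow[OF True assms(2)] by (simp add: flip_labeling_apply)
  next
    case False
    then show ?thesis using assms(1)
      unfolding flip_labeling_def labelings_def by (auto simp: PiE_def extensional_def)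
  qed
qed

definition labeling_families :: "nat \<Rightarrow> nat \<Rightarrow> (nat \<Rightarrow> nat set \<Rightarrow> nat) set" where
  "labeling_families N r = {..<N - 1} \<rightarrow>\<^sub>E labelings r"

text \<open>File \<theta> is file \<theta> mod r of edge \<theta> div r, whose right endpoint gets the flipped labeling.\<close>
definition flip_family :: "nat \<Rightarrow> nat \<Rightarrow> (nat \<Rightarrow> nat set \<Rightarrow> nat) \<Rightarrow> nat \<Rightarrow> nat set \<Rightarrow> nat" where
  "flip_family r \<theta> g = g(\<theta> div r := flip_labeling r (\<theta> mod r) (g (\<theta> div r)))"

definition query_pairs :: "nat \<Rightarrow> ((nat set \<Rightarrow> nat) \<times> (nat set \<Rightarrow> nat)) set" where
  "query_pairs r = labelings r \<times> labelings r"

text \<open>Server i is the right endpoint of edge i - 1, labeled by h, and the left endpoint of edge i,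
  labeled by g; the labeling it gets for a missing edge is irrelevant.\<close>
definition server_query ::
  "nat \<Rightarrow> nat \<Rightarrow> (nat \<Rightarrow> nat set \<Rightarrow> nat) \<Rightarrow> (nat \<Rightarrow> nat set \<Rightarrow> nat) \<Rightarrow> nat \<Rightarrow> nat" where
  "server_query N r h g i = (if i < N then to_nat_on (query_pairs r)
     (if i = 0 then base_labeling r else h (i - 1), if i < N - 1 then g i else base_labeling r)
     else 0)"

definition path_queries :: "nat \<Rightarrow> nat \<Rightarrow> nat \<Rightarrow> (nat \<Rightarrow> nat) pmf" where
  "path_queries N r \<theta> =
     map_pmf (\<lambda>g. server_query N r (flip_family r \<theta> g) g) (pmf_of_set (labeling_families N r))"

definition edge_parity :: "nat \<Rightarrow> nat \<Rightarrow> (nat set \<Rightarrow> nat) \<Rightarrow> nat set \<Rightarrow> (nat \<Rightarrow> bool list) \<Rightarrow> bit" where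
  "edge_parity r e \<sigma> T W = (\<Sum>k\<in>T. of_bool (W (r * e + k) ! \<sigma> T))"

definition server_parity ::
  "nat \<Rightarrow> nat \<Rightarrow> nat \<Rightarrow> (nat set \<Rightarrow> nat) \<Rightarrow> (nat set \<Rightarrow> nat) \<Rightarrow> nat set \<Rightarrow> (nat \<Rightarrow> bool list) \<Rightarrow> bit" where
  "server_parity N r i \<sigma>L \<sigma>R T W =
     (if 0 < i then edge_parity r (i - 1) \<sigma>L T W else 0) + (if i < N - 1 then edge_parity r i \<sigma>R T W else 0)"

definition answer_vector ::
  "nat \<Rightarrow> nat \<Rightarrow> nat \<Rightarrow> (nat set \<Rightarrow> nat) \<Rightarrow> (nat set \<Rightarrow> nat) \<Rightarrow> (nat \<Rightarrow> bool list) \<Rightarrow> nat set \<Rightarrow> bit" where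
  "answer_vector N r i \<sigma>L \<sigma>R W = restrict (\<lambda>T. server_parity N r i \<sigma>L \<sigma>R T W) (Pow {..<r} - {{}})"

definition answer_vectors :: "nat \<Rightarrow> (nat set \<Rightarrow> bit) set" where
  "answer_vectors r = (Pow {..<r} - {{}}) \<rightarrow>\<^sub>E UNIV"

definition path_answer :: "nat \<Rightarrow> nat \<Rightarrow> nat \<Rightarrow> nat \<Rightarrow> (nat \<Rightarrow> bool list) \<Rightarrow> nat" where
  "path_answer N r i q W = to_nat_on (answer_vectors r)
     (case from_nat_into (query_pairs r) q of (\<sigma>L, \<sigma>R) \<Rightarrow> answer_vector N r i \<sigma>L \<sigma>R W)"

definition path_decoder :: "nat \<Rightarrow> nat \<Rightarrow> nat \<Rightarrow> (nat \<Rightarrow> nat) \<Rightarrow> (nat \<Rightarrow> nat) \<Rightarrow> bool list" where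
  "path_decoder N r \<theta> q a = (SOME w. \<exists>W\<in>file_space (num_files (path_edges N) r) (2 ^ r).
      (\<lambda>i. if i < N then path_answer N r i (q i) W else 0) = a \<and> w = W \<theta>)"

lemma num_files_path_edges: "num_files (path_edges N) r = r * (N - 1)"
  unfolding num_files_def path_edges_def by simp

lemma finite_labeling_families [simp]: "finite (labeling_families N r)"
  unfolding labeling_families_def by (simp add: finite_PiE)

lemma labeling_families_nonempty [simp]: "labeling_families N r \<noteq> {}"
  unfolding labeling_families_def using labelings_nonempty by (simp add: PiE_eq_empty_iff)

lemma labeling_families_apply: "g \<in> labeling_families N r \<Longrightarrow> e < N - 1 \<Longrightarrow> g e \<in> labelings r"
  unfolding labeling_families_def by auto

lemma set_pmf_path_queries:
  "set_pmf (path_queries N r \<theta>) = (\<lambda>g. server_query N r (flip_family r \<theta> g) g) ` labeling_families N r"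
  unfolding path_queries_def by simp

lemma file_index_bounds:
  fixes \<theta> r N :: nat
  assumes "\<theta> < r * (N - 1)"
  shows "\<theta> mod r < r" "\<theta> div r < N - 1"
proof -
  show "\<theta> mod r < r" using assms by (cases "r = 0") simp_all
  show "\<theta> div r < N - 1" using assms by (simp add: less_mult_imp_div_less mult.commute)
qed

lemma flip_family_in_labeling_families:
  assumes "g \<in> labeling_families N r" "\<theta> < r * (N - 1)"
  shows "flip_family r \<theta> g \<in> labeling_families N r"
  using assms labeling_families_apply[OF assms(1)] flip_labeling_in_labelings file_index_bounds[OF assms(2)]
  unfolding flip_family_def labeling_families_def by (auto simp: PiE_iff extensional_def)

lemma flip_family_flip_family:
  assumes "g \<in> labeling_families N r" "\<theta> < r * (N - 1)"
  shows "flip_family r \<theta> (flip_family r \<theta> g) = g"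
  using flip_labeling_flip_labeling[OF labeling_families_apply[OF assms(1)]] file_index_bounds[OF assms(2)]
  unfolding flip_family_def by simp

lemma path_answer_server_query:
  assumes "h \<in> labeling_families N r" "g \<in> labeling_families N r" "i < N"
  shows "path_answer N r i (server_query N r h g i) W = to_nat_on (answer_vectors r)
    (answer_vector N r i (if i = 0 then base_labeling r else h (i - 1))
       (if i < N - 1 then g i else base_labeling r) W)"
proof -
  have "(if i = 0 then base_labeling r else h (i - 1), if i < N - 1 then g i else base_labeling r)
      \<in> query_pairs r"
    unfolding query_pairs_def using assms base_labeling_in_labelings labeling_families_apply by auto
  then show ?thesis unfolding path_answer_def server_query_def using assms(3)
    by (simp add: countable_finite query_pairs_def)
qed

lemma answer_vector_in_answer_vectors: "answer_vector N r i \<sigma>L \<sigma>R W \<in> answer_vectors r"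
  unfolding answer_vector_def answer_vectors_def by simp

lemma finite_answer_vectors [simp]: "finite (answer_vectors r)"
  unfolding answer_vectors_def by (intro finite_PiE) (simp_all add: UNIV_bit)

lemma path_answer_eq_iff:
  assumes "h \<in> labeling_families N r" "g \<in> labeling_families N r" "i < N"
  shows "path_answer N r i (server_query N r h g i) W = path_answer N r i (server_query N r h g i) W'
    \<longleftrightarrow> (\<forall>T \<in> Pow {..<r} - {{}}.
          server_parity N r i (h (i - 1)) (g i) T W = server_parity N r i (h (i - 1)) (g i) T W')"
proof -
  have "inj_on (to_nat_on (answer_vectors r)) (answer_vectors r)"
    by (simp add: inj_on_to_nat_on countable_finite)
  then have "path_answer N r i (server_query N r h g i) W = path_answer N r i (server_query N r h g i) W'
      \<longleftrightarrow> answer_vector N r i (if i = 0 then base_labeling r else h (i - 1))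
              (if i < N - 1 then g i else base_labeling r) W
          = answer_vector N r i (if i = 0 then base_labeling r else h (i - 1))
              (if i < N - 1 then g i else base_labeling r) W'"
    unfolding path_answer_server_query[OF assms] by (simp add: inj_on_eq_iff answer_vector_in_answer_vectors)
  then show ?thesis by (auto simp: answer_vector_def fun_eq_iff restrict_def server_parity_def)
qed

section \<open>Reliability\<close>

text \<open>Along a path, edge sums seen by consecutive servers telescope; only at the edge e0 do the
  two endpoints use different labelings.\<close>
lemma cancel_along_path:
  fixes a b a' b' :: "nat \<Rightarrow> 'a::cancel_semigroup_add"
  assumes e0: "e0 < M"
    and same: "\<And>e. e < M \<Longrightarrow> e \<noteq> e0 \<Longrightarrow> a e = b e \<and> a' e = b' e"
    and first: "a 0 = a' 0"
    and inner: "\<And>e. Suc e < M \<Longrightarrow> b e + a (Suc e) = b' e + a' (Suc e)"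
    and last: "b (M - 1) = b' (M - 1)"
  shows "a e0 = a' e0" "b e0 = b' e0"
proof -
  have "a e = a' e" if "e \<le> e0" for e
    using that
  proof (induction e)
    case (Suc e)
    then have "b e = b' e" using same[of e] e0 by auto
    then show ?case using inner[of e] Suc e0 by simp
  qed (rule first)
  then show "a e0 = a' e0" by simp
  have "b e = b' e" if "e0 \<le> e" "e \<le> M - 1" for e
    using that(2,1)
  proof (induction e rule: inc_induct)
    case (step e)
    then have "a (Suc e) = a' (Suc e)" using same[of "Suc e"] step.IH by auto
    then show ?case using inner[of e] step by simp
  qed (rule last)
  then show "b e0 = b' e0" using e0 by simp
qed

lemma file_bit_eq_parities:
  assumes "\<sigma> \<in> labelings r" "k < r" "U \<in> Pow {..<r}"
  shows "of_bool (W (r * e + k) ! \<sigma> U)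
    = edge_parity r e \<sigma> U W + edge_parity r e (flip_labeling r k \<sigma>) (flip k U) W"
proof -
  have "finite U" using assms(3) by (auto intro: finite_subset)
  then show ?thesis
    using sum_flip[of U "\<lambda>k. of_bool (W (r * e + k) ! \<sigma> U)" k] flip_Pow[OF assms(3,2)]
    unfolding edge_parity_def by (simp add: flip_labeling_apply)
qed

lemma path_answers_determine_file:
  assumes N: "2 \<le> N" and \<theta>: "\<theta> < r * (N - 1)" and g: "g \<in> labeling_families N r"
    and len: "length (W \<theta>) = 2 ^ r" "length (W' \<theta>) = 2 ^ r"
    and ans: "\<And>i. i < N \<Longrightarrow> path_answer N r i (server_query N r (flip_family r \<theta> g) g i) W
                          = path_answer N r i (server_query N r (flip_family r \<theta> g) g i) W'"
  shows "W \<theta> = W' \<theta>"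
proof -
  define e0 k0 \<sigma> where "e0 = \<theta> div r" and "k0 = \<theta> mod r" and "\<sigma> = g e0"
  have k0: "k0 < r" and e0: "e0 < N - 1" using file_index_bounds[OF \<theta>] by (simp_all add: e0_def k0_def)
  have \<theta>_eq: "\<theta> = r * e0 + k0" by (simp add: e0_def k0_def)
  have \<sigma>: "\<sigma> \<in> labelings r" using labeling_families_apply[OF g e0] by (simp add: \<sigma>_def)
  have flipped: "flip_family r \<theta> g e = (if e = e0 then flip_labeling r k0 \<sigma> else g e)" for e
    by (simp add: flip_family_def e0_def k0_def \<sigma>_def)
  have server: "\<forall>T \<in> Pow {..<r} - {{}}. server_parity N r i (flip_family r \<theta> g (i - 1)) (g i) T W
      = server_parity N r i (flip_family r \<theta> g (i - 1)) (g i) T W'" if "i < N" for i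
    using ans[OF that] path_answer_eq_iff[OF flip_family_in_labeling_families[OF g \<theta>] g that] by blast
  have agree: "edge_parity r e0 \<sigma> T W = edge_parity r e0 \<sigma> T W'
      \<and> edge_parity r e0 (flip_labeling r k0 \<sigma>) T W = edge_parity r e0 (flip_labeling r k0 \<sigma>) T W'"
    if T: "T \<in> Pow {..<r}" for T
  proof (cases "T = {}")
    case False
    then have T: "T \<in> Pow {..<r} - {{}}" using T by simp
    define a b where "a V e = edge_parity r e (g e) T V"
      and "b V e = edge_parity r e (flip_family r \<theta> g e) T V" for V e
    have "a W 0 = a W' 0"
      using server[of 0] T N by (simp add: a_def server_parity_def)
    moreover have "b W e + a W (Suc e) = b W' e + a W' (Suc e)" if "Suc e < N - 1" for e
      using server[of "Suc e"] T that by (simp add: a_def b_def server_parity_def)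
    moreover have "b W (N - 1 - 1) = b W' (N - 1 - 1)"
      using server[of "N - 1"] T N by (simp add: b_def server_parity_def)
    moreover have "a V e = b V e" if "e \<noteq> e0" for e V
      using that by (simp add: a_def b_def flipped)
    ultimately have "a W e0 = a W' e0" "b W e0 = b W' e0"
      using cancel_along_path[where a = "a W" and b = "b W" and a' = "a W'" and b' = "b W'", OF e0]
      by blast+
    then show ?thesis by (simp add: a_def b_def flipped \<sigma>_def)
  qed (simp add: edge_parity_def)
  have "W \<theta> ! j = W' \<theta> ! j" if j: "j < 2 ^ r" for j
  proof -
    have "j \<in> \<sigma> ` Pow {..<r}" using \<sigma> j by (simp add: labelings_def bij_betw_def)
    then obtain U where U: "U \<in> Pow {..<r}" "\<sigma> U = j" by blast
    have "of_bool (W \<theta> ! j)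
        = edge_parity r e0 \<sigma> U W + edge_parity r e0 (flip_labeling r k0 \<sigma>) (flip k0 U) W"
      using file_bit_eq_parities[OF \<sigma> k0 U(1)] U(2) by (simp add: \<theta>_eq)
    also have "\<dots> = edge_parity r e0 \<sigma> U W' + edge_parity r e0 (flip_labeling r k0 \<sigma>) (flip k0 U) W'"
      using agree[OF U(1)] agree[OF flip_Pow[OF U(1) k0]] by simp
    also have "\<dots> = of_bool (W' \<theta> ! j)"
      using file_bit_eq_parities[OF \<sigma> k0 U(1)] U(2) by (simp add: \<theta>_eq)
    finally show ?thesis by (metis of_bool_eq_iff)
  qed
  then show ?thesis using len by (intro nth_equalityI) auto
qed

section \<open>Locality and privacy\<close>

lemma stored_path_edges:
  assumes "e < N - 1" "k < r"
  shows "stored (path_edges N) r (r * e + k) e" "stored (path_edges N) r (r * e + k) (Suc e)"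
proof -
  have "r * e + k < r * Suc e" using assms(2) by simp
  also have "\<dots> \<le> r * (N - 1)" using assms(1) by (intro mult_le_mono2) simp
  finally show "stored (path_edges N) r (r * e + k) e" "stored (path_edges N) r (r * e + k) (Suc e)"
    unfolding stored_def num_files_path_edges using assms by (simp_all add: path_edges_def)
qed

lemma path_answer_local:
  assumes "i < N" "\<forall>k. stored (path_edges N) r k i \<longrightarrow> W k = W' k"
  shows "path_answer N r i q W = path_answer N r i q W'"
proof -
  have "edge_parity r e \<sigma> T W = edge_parity r e \<sigma> T W'"
    if "T \<in> Pow {..<r} - {{}}" "e < N - 1" "i = e \<or> i = Suc e" for e \<sigma> T
    unfolding edge_parity_def
    using that assms(2) stored_path_edges[OF that(2), of _ r] by (intro sum.cong) auto
  then have "answer_vector N r i \<sigma>L \<sigma>R W = answer_vector N r i \<sigma>L \<sigma>R W'" for \<sigma>L \<sigma>R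
    unfolding answer_vector_def server_parity_def using assms(1) by (intro restrict_ext) auto
  then show ?thesis unfolding path_answer_def by (simp split: prod.split)
qed

lemma server_query_marginal:
  assumes \<theta>: "\<theta> < r * (N - 1)"
  shows "map_pmf (\<lambda>q. q i) (path_queries N r \<theta>)
       = map_pmf (\<lambda>g. server_query N r g g i) (pmf_of_set (labeling_families N r))"
proof -
  let ?G = "pmf_of_set (labeling_families N r)"
  let ?\<phi> = "flip_family r \<theta>"
  have \<phi>: "map_pmf ?\<phi> ?G = ?G"
    using flip_family_in_labeling_families flip_family_flip_family \<theta>
    by (intro map_pmf_of_set_involution) simp_all
  have "map_pmf (\<lambda>q. q i) (path_queries N r \<theta>) = map_pmf (\<lambda>g. server_query N r (?\<phi> g) g i) ?G"
    unfolding path_queries_def by (simp add: pmf.map_comp o_def)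
  also have "\<dots> = map_pmf (\<lambda>g. server_query N r g g i) ?G"
  proof (cases "i = Suc (\<theta> div r)")
    case True
    then have "server_query N r (?\<phi> g) g i = server_query N r (?\<phi> g) (?\<phi> g) i" for g
      unfolding server_query_def flip_family_def by simp
    then have "map_pmf (\<lambda>g. server_query N r (?\<phi> g) g i) ?G
        = map_pmf (\<lambda>g. server_query N r g g i) (map_pmf ?\<phi> ?G)"
      by (simp add: pmf.map_comp o_def)
    then show ?thesis using \<phi> by simp
  next
    case False
    then have "server_query N r (?\<phi> g) g i = server_query N r g g i" for g
      unfolding server_query_def flip_family_def by (cases i) simp_all
    then show ?thesis by simp
  qed
  finally show ?thesis .
qed

lemma server_view_via_query_marginal:
  "server_view E r L Qd Ans i \<theta> =
     map_pmf (\<lambda>(x, W). (x, Ans i x W, \<lambda>k. if stored E r k i then W k else []))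
       (pair_pmf (map_pmf (\<lambda>q. q i) (Qd \<theta>)) (files_pmf (num_files E r) L))"
proof -
  have "pair_pmf (map_pmf (\<lambda>q. q i) (Qd \<theta>)) (files_pmf (num_files E r) L)
      = map_pmf (\<lambda>(q, W). (q i, W)) (pair_pmf (Qd \<theta>) (files_pmf (num_files E r) L))"
    using map_pair[of "\<lambda>q. q i" id "Qd \<theta>" "files_pmf (num_files E r) L"] by (simp add: pmf.map_id)
  then show ?thesis unfolding server_view_def joint_pmf_def
    by (simp only: pmf.map_comp o_def) (rule pmf.map_cong[OF refl], auto)
qed

lemma path_pir_scheme:
  assumes "2 \<le> N"
  shows "pir_scheme N (path_edges N) r (2 ^ r) (path_queries N r) (path_answer N r) (path_decoder N r)"
proof -
  let ?K = "num_files (path_edges N) r"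
  have reliable: "path_decoder N r \<theta> q (\<lambda>i. if i < N then path_answer N r i (q i) W else 0) = W \<theta>"
    if \<theta>: "\<theta> < ?K" and q: "q \<in> set_pmf (path_queries N r \<theta>)" and W: "W \<in> file_space ?K (2 ^ r)"
    for \<theta> q W
  proof -
    let ?a = "\<lambda>i. if i < N then path_answer N r i (q i) W else 0"
    obtain g where g: "g \<in> labeling_families N r" and qg: "q = server_query N r (flip_family r \<theta> g) g"
      using q unfolding set_pmf_path_queries by blast
    obtain W' where W': "W' \<in> file_space ?K (2 ^ r)"
      and a: "(\<lambda>i. if i < N then path_answer N r i (q i) W' else 0) = ?a"
      and dec: "path_decoder N r \<theta> q ?a = W' \<theta>"
      using someI_ex[of "\<lambda>w. \<exists>W'\<in>file_space ?K (2 ^ r).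
          (\<lambda>i. if i < N then path_answer N r i (q i) W' else 0) = ?a \<and> w = W' \<theta>"] W
      unfolding path_decoder_def by blast
    have "path_answer N r i (q i) W' = path_answer N r i (q i) W" if "i < N" for i
      using fun_cong[OF a, of i] that by simp
    moreover have "length (W' \<theta>) = 2 ^ r" "length (W \<theta>) = 2 ^ r"
      using W W' \<theta> by (auto simp: file_space_def PiE_iff)
    ultimately have "W' \<theta> = W \<theta>"
      using path_answers_determine_file[OF assms _ g] \<theta> qg by (simp add: num_files_path_edges)
    then show ?thesis using dec by simp
  qed
  have queries: "finite (set_pmf (path_queries N r \<theta>)) \<and> (\<forall>q\<in>set_pmf (path_queries N r \<theta>). \<forall>i\<ge>N. q i = 0)"
    for \<theta> by (auto simp: set_pmf_path_queries server_query_def)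
  have privacy: "server_view (path_edges N) r (2 ^ r) (path_queries N r) (path_answer N r) i \<theta>
      = server_view (path_edges N) r (2 ^ r) (path_queries N r) (path_answer N r) i \<theta>'"
    if "\<theta> < ?K" "\<theta>' < ?K" for i \<theta> \<theta>'
    using that unfolding server_view_via_query_marginal
    by (simp only: server_query_marginal num_files_path_edges)
  have locality: "\<forall>q. \<forall>W\<in>file_space ?K (2 ^ r). \<forall>W'\<in>file_space ?K (2 ^ r).
      (\<forall>k. stored (path_edges N) r k i \<longrightarrow> W k = W' k) \<longrightarrow> path_answer N r i q W = path_answer N r i q W'"
    if "i < N" for i
    using path_answer_local[OF that] by blast
  show ?thesis
    unfolding pir_scheme_def Let_def using queries reliable locality privacy by blast
qed

lemma card_answer_vectors: "card (answer_vectors r) = 2 ^ (2 ^ r - 1)"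
proof -
  have "card (UNIV :: bit set) = 2" by (simp add: UNIV_bit)
  moreover have "card (Pow {..<r} - {{}}) = 2 ^ r - 1" by (simp add: card_Pow)
  ultimately show ?thesis unfolding answer_vectors_def by (simp add: card_PiE)
qed

lemma set_pmf_path_answer:
  "set_pmf (answer_pmf K L Qd (path_answer N r) i \<theta>) \<subseteq> to_nat_on (answer_vectors r) ` answer_vectors r"
proof -
  have "path_answer N r i q W \<in> to_nat_on (answer_vectors r) ` answer_vectors r" for q W
    unfolding path_answer_def using answer_vector_in_answer_vectors by (simp split: prod.split)
  then show ?thesis unfolding answer_pmf_def by auto
qed

lemma finite_set_pmf_path_answer: "finite (set_pmf (answer_pmf K L Qd (path_answer N r) i \<theta>))"
  by (rule finite_subset[OF set_pmf_path_answer]) simp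

lemma path_answer_entropy_le: "entropy2 (answer_pmf K L Qd (path_answer N r) i \<theta>) \<le> 2 ^ r - 1"
proof -
  let ?p = "answer_pmf K L Qd (path_answer N r) i \<theta>"
  have "card (set_pmf ?p) \<le> card (answer_vectors r)"
    using set_pmf_path_answer card_image_le[of _ "to_nat_on (answer_vectors r)"]
    by (metis card_mono finite_answer_vectors finite_imageI le_trans)
  moreover have "0 < card (set_pmf ?p)"
    using finite_set_pmf_path_answer set_pmf_not_empty by (simp add: card_gt_0_iff)
  ultimately have "log 2 (card (set_pmf ?p)) \<le> log 2 (2 ^ (2 ^ r - 1))"
    by (subst log_le_cancel_iff) (simp_all add: card_answer_vectors)
  then show ?thesis
    by (simp add: log_nat_power of_nat_diff order_trans[OF entropy2_le_log_card[OF finite_set_pmf_path_answer]])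
qed

lemma finite_file_space [simp]: "finite (file_space K L)"
  unfolding file_space_def by (intro finite_PiE) (simp_all add: finite_list_length)

lemma path_answer_entropy_pos:
  assumes N: "2 \<le> N" and r: "0 < r"
  shows "0 < entropy2 (answer_pmf (r * (N - 1)) (2 ^ r) (path_queries N r) (path_answer N r) 0 0)"
proof -
  let ?K = "r * (N - 1)"
  define W where "W c = restrict (\<lambda>_. replicate (2 ^ r) c) {0..<?K}" for c :: bool
  obtain g where g: "g \<in> labeling_families N r" using labeling_families_nonempty by blast
  let ?q = "server_query N r (flip_family r 0 g) g"
  have in_support: "path_answer N r 0 (?q 0) (W c)
      \<in> set_pmf (answer_pmf ?K (2 ^ r) (path_queries N r) (path_answer N r) 0 0)" for c
  proof -
    have "W c \<in> file_space ?K (2 ^ r)" unfolding W_def file_space_def by simp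
    moreover from this have "file_space ?K (2 ^ r) \<noteq> {}" by blast
    ultimately have "(?q, W c) \<in> set_pmf (joint_pmf ?K (2 ^ r) (path_queries N r) 0)"
      using g by (auto simp: joint_pmf_def files_pmf_def set_pmf_path_queries)
    then show ?thesis unfolding answer_pmf_def by force
  qed
  have \<sigma>: "g 0 \<in> labelings r" using labeling_families_apply[OF g] N by simp
  have "{0} \<in> Pow {..<r}" using r by simp
  then have "g 0 {0} < 2 ^ r" using \<sigma> unfolding labelings_def by auto
  then have parity: "edge_parity r 0 (g 0) {0} (W c) = of_bool c" for c
    using r N by (simp add: edge_parity_def W_def)
  have "path_answer N r 0 (?q 0) (W False) \<noteq> path_answer N r 0 (?q 0) (W True)"
  proof
    assume "path_answer N r 0 (?q 0) (W False) = path_answer N r 0 (?q 0) (W True)"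
    then have "edge_parity r 0 (g 0) {0} (W False) = edge_parity r 0 (g 0) {0} (W True)"
      using path_answer_eq_iff[OF flip_family_in_labeling_families[OF g] g, of 0] r N
      by (simp add: server_parity_def)
    then show False by (simp add: parity)
  qed
  then show ?thesis by (rule entropy2_pos[OF finite_set_pmf_path_answer in_support in_support])
qed

lemma capacity_bound_eq:
  fixes n :: real
  assumes "0 < r"
  shows "2 / n * (1 / (2 - 1 / 2 ^ (r - 1))) = 2 ^ r / (n * (2 ^ r - 1))"
proof -
  obtain s where "r = Suc s" using assms by (cases r) auto
  then show ?thesis by (simp add: field_simps)
qed

theorem mainTheorem4:
  fixes N r :: nat
  assumes "N \<ge> 2" and "r \<ge> 1"
  shows "pir_capacity N (path_edges N) r \<ge> ereal (2 / real N * (1 / (2 - 1 / 2 ^ (r - 1))))"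
proof -
  have r: "0 < r" using assms(2) by simp
  have K: "0 < num_files (path_edges N) r" using assms r by (simp add: num_files_path_edges)
  have "2 / real N * (1 / (2 - 1 / 2 ^ (r - 1))) = real (2 ^ r) / (real N * (2 ^ r - 1))"
    using capacity_bound_eq[OF r] by simp
  also have "\<dots> \<le> pir_rate N (path_edges N) r (2 ^ r) (path_queries N r) (path_answer N r)"
    using path_answer_entropy_pos[OF assms(1) r] assms(1) K
    by (intro pir_rate_ge[OF K path_answer_entropy_le, where j = 0 and \<theta>' = 0])
      (auto simp: num_files_path_edges)
  finally have "ereal (2 / real N * (1 / (2 - 1 / 2 ^ (r - 1))))
      \<le> ereal (pir_rate N (path_edges N) r (2 ^ r) (path_queries N r) (path_answer N r))"
    by simp
  also have "\<dots> \<le> pir_capacity N (path_edges N) r"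
    by (rule pir_capacity_ge_rate[OF path_pir_scheme[OF assms(1)]]) simp
  finally show ?thesis .
qed

end
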